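(* The category $\mathcal{C}(numOp)^{op}$ described in the context is not quasi-Gröbner.
   Context: Quasi-Gröbner categories. Let $\mathcal{C}$ be a small category and $c$ an object. An admissible order on the morphisms out of $c$ is a choice, for every object $c'$, of a well-order on $\mathrm{Hom}(c,c')$ such that $f\prec f'$ implies $g\circ f\prec g\circ f'$ for all $g$. On morphisms out of $c$ put the preorder $f\le g$ iff $g=h\circ f$ for some $h$; $|c/\mathcal{C}|$ is the associated poset. A poset is Noetherian if every sequence $x_1,x_2,\dots$ has $i<j$ with $x_i\le x_j$. $\mathcal{C}$ is Gröbner if for every object $c$: (G1) morphisms out of $c$ admit an admissible order, and (G2) $|c/\mathcal{C}|$ is Noetherian. A functor $\Phi:\mathcal{C}\to\mathcal{D}$ has property (F) if for every object $d$ of $\mathcal{D}$ there are finitely many objects $c_i$ of $\mathcal{C}$ and morphisms $f_i:d\to\Phi(c_i)$ such that every $f:d\to\Phi(c)$ factors as $\Phi(g)\circ f_i$ for some $i$ and $g:c_i\to c$. $\mathcal{D}$ is quasi-Gröbner if there is a Gröbner $\mathcal{C}$ and an essentially surjective functor $\mathcal{C}\to\mathcal{D}$ with property (F). Operadic graphs. A graph with half-edges is finite sets $V$, $H$, an involution $inv$ on $H$ and $t:H\to V$; fixed points of $inv$ are leaves, two-element orbits are edges. An operadic graph additionally has a total order on leaves (indexed $0,1,\dots$), for each vertex $v$ a total order on $t^{-1}(v)$, and a total order on $V$ (indexed $1,\dots,n$); considered up to isomorphism preserving all data. The category $\mathcal{C}(numOp)^{op}$: objects are connected operadic graphs with at least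 one vertex (loops, multiple edges and any number of leaves allowed). If $p$ has vertices $v_1<\dots<v_n$, a morphism $p\to q$ consists of such graphs $q_1,\dots,q_n$, $q_l$ having as many leaves as $v_l$ has half-edges, and a bijection $\bigsqcup_l V(q_l)\to V(q)$ order preserving on each $V(q_l)$, such that $q$ is obtained by substituting $q_l$ into $v_l$: the $i$-th leaf of $q_l$ is identified with the $i$-th half-edge of $v_l$; an edge of $p$ between the $i$-th half-edge of $v_j$ and the $k$-th half-edge of $v_l$ becomes an edge of $q$ between the $i$-th leaf of $q_j$ and the $k$-th leaf of $q_l$; if the $i$-th half-edge of $v_j$ is the $k$-th leaf of $p$ then the $i$-th leaf of $q_j$ is the $k$-th leaf of $q$; half-edge orders come from the $q_l$ and the vertex order of $q$ is transported along the bijection. Composition is iterated substitution. (This is the opposite of $\mathcal{C}(P)$ for $P$ the operad of modular operads, restricted to operations of non-zero arity.) *)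

theory Defs
  imports Main
begin

record ('o, 'm) category =
  Ob  :: "'o set"
  Mor :: "'m set"
  Dom :: "'m \<Rightarrow> 'o"
  Cod :: "'m \<Rightarrow> 'o"
  Idm :: "'o \<Rightarrow> 'm"
  Cmp :: "'m \<Rightarrow> 'm \<Rightarrow> 'm"   (* Cmp C g f = g \<circ> f *)

definition Hom :: "('o, 'm, 'x) category_scheme \<Rightarrow> 'o \<Rightarrow> 'o \<Rightarrow> 'm set" where
  "Hom C a b = {f \<in> Mor C. Dom C f = a \<and> Cod C f = b}"

definition is_category :: "('o, 'm, 'x) category_scheme \<Rightarrow> bool" where
  "is_category C \<longleftrightarrow>
     (\<forall>f\<in>Mor C. Dom C f \<in> Ob C \<and> Cod C f \<in> Ob C) \<and>
     (\<forall>a\<in>Ob C. Idm C a \<in> Hom C a a) \<and>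
     (\<forall>f\<in>Mor C. \<forall>g\<in>Mor C. Cod C f = Dom C g \<longrightarrow> Cmp C g f \<in> Hom C (Dom C f) (Cod C g)) \<and>
     (\<forall>f\<in>Mor C. Cmp C (Idm C (Cod C f)) f = f \<and> Cmp C f (Idm C (Dom C f)) = f) \<and>
     (\<forall>f\<in>Mor C. \<forall>g\<in>Mor C. \<forall>h\<in>Mor C. Cod C f = Dom C g \<longrightarrow> Cod C g = Dom C h \<longrightarrow>
        Cmp C h (Cmp C g f) = Cmp C (Cmp C h g) f)"

definition is_functor ::
  "('o, 'm, 'x) category_scheme \<Rightarrow> ('p, 'n, 'y) category_scheme \<Rightarrow> ('o \<Rightarrow> 'p) \<Rightarrow> ('m \<Rightarrow> 'n) \<Rightarrow> bool" where
  "is_functor C D Fo Fm \<longleftrightarrow>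
     (\<forall>a\<in>Ob C. Fo a \<in> Ob D) \<and>
     (\<forall>f\<in>Mor C. Fm f \<in> Hom D (Fo (Dom C f)) (Fo (Cod C f))) \<and>
     (\<forall>a\<in>Ob C. Fm (Idm C a) = Idm D (Fo a)) \<and>
     (\<forall>f\<in>Mor C. \<forall>g\<in>Mor C. Cod C f = Dom C g \<longrightarrow> Fm (Cmp C g f) = Cmp D (Fm g) (Fm f))"

definition isomorphic :: "('o, 'm, 'x) category_scheme \<Rightarrow> 'o \<Rightarrow> 'o \<Rightarrow> bool" where
  "isomorphic C a b \<longleftrightarrow> (\<exists>f\<in>Hom C a b. \<exists>g\<in>Hom C b a.
       Cmp C g f = Idm C a \<and> Cmp C f g = Idm C b)"

definition essentially_surjective ::
  "('o, 'm, 'x) category_scheme \<Rightarrow> ('p, 'n, 'y) category_scheme \<Rightarrow> ('o \<Rightarrow> 'p) \<Rightarrow> bool" where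
  "essentially_surjective C D Fo \<longleftrightarrow> (\<forall>d\<in>Ob D. \<exists>c\<in>Ob C. isomorphic D (Fo c) d)"

definition property_F ::
  "('o, 'm, 'x) category_scheme \<Rightarrow> ('p, 'n, 'y) category_scheme \<Rightarrow> ('o \<Rightarrow> 'p) \<Rightarrow> ('m \<Rightarrow> 'n) \<Rightarrow> bool" where
  "property_F C D Fo Fm \<longleftrightarrow>
     (\<forall>d\<in>Ob D. \<exists>I :: ('o \<times> 'n) set. finite I \<and>
        (\<forall>(ci, fi)\<in>I. ci \<in> Ob C \<and> fi \<in> Hom D d (Fo ci)) \<and>
        (\<forall>c\<in>Ob C. \<forall>f\<in>Hom D d (Fo c). \<exists>(ci, fi)\<in>I. \<exists>g\<in>Hom C ci c. f = Cmp D (Fm g) fi))"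

text \<open>A well-order in the sense of
  the library (\<open>well_order_on\<close>) is reflexive; the strict order is \<open>f \<noteq> f'\<close> plus membership.\<close>
definition admissible_order :: "('o, 'm, 'x) category_scheme \<Rightarrow> 'o \<Rightarrow> ('o \<Rightarrow> 'm rel) \<Rightarrow> bool" where
  "admissible_order C c R \<longleftrightarrow>
     (\<forall>c'\<in>Ob C. well_order_on (Hom C c c') (R c')) \<and>
     (\<forall>c'\<in>Ob C. \<forall>c''\<in>Ob C. \<forall>f\<in>Hom C c c'. \<forall>f'\<in>Hom C c c'. \<forall>g\<in>Hom C c' c''.
        (f, f') \<in> R c' \<and> f \<noteq> f' \<longrightarrow>
        (Cmp C g f, Cmp C g f') \<in> R c'' \<and> Cmp C g f \<noteq> Cmp C g f')"

definition out_le :: "('o, 'm, 'x) category_scheme \<Rightarrow> 'm \<Rightarrow> 'm \<Rightarrow> bool" where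
  "out_le C f g \<longleftrightarrow> (\<exists>h\<in>Mor C. Dom C h = Cod C f \<and> g = Cmp C h f)"

definition out_mor :: "('o, 'm, 'x) category_scheme \<Rightarrow> 'o \<Rightarrow> 'm set" where
  "out_mor C c = {f \<in> Mor C. Dom C f = c}"

text \<open>Noetherian condition for a (pre)ordered set: every sequence has i<j with x_i \<le> x_j.
  The poset |c/C| is Noetherian iff the preorder on its representatives is.\<close>
definition noetherian_on :: "'a set \<Rightarrow> ('a \<Rightarrow> 'a \<Rightarrow> bool) \<Rightarrow> bool" where
  "noetherian_on A le \<longleftrightarrow> (\<forall>s :: nat \<Rightarrow> 'a. (\<forall>k. s k \<in> A) \<longrightarrow> (\<exists>i j. i < j \<and> le (s i) (s j)))"

definition groebner :: "('o, 'm, 'x) category_scheme \<Rightarrow> bool" where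
  "groebner C \<longleftrightarrow> (\<forall>c\<in>Ob C. (\<exists>R. admissible_order C c R) \<and> noetherian_on (out_mor C c) (out_le C))"

text \<open>D is quasi-Groebner via the Groebner category C and the functor (Fo, Fm).
  Quasi-Groebner means: this holds for some small category C (of some types).\<close>
definition quasi_groebner_via ::
  "('o, 'm, 'x) category_scheme \<Rightarrow> ('p, 'n, 'y) category_scheme \<Rightarrow> ('o \<Rightarrow> 'p) \<Rightarrow> ('m \<Rightarrow> 'n) \<Rightarrow> bool" where
  "quasi_groebner_via C D Fo Fm \<longleftrightarrow> is_category C \<and> groebner C \<and> is_functor C D Fo Fm \<and>
     essentially_surjective C D Fo \<and> property_F C D Fo Fm"

text \<open>Canonical representative of an isomorphism class of operadic graphs:
  vertices are 0..<n (in their order), the half-edges at vertex v are (v,0),...,(v,deg v - 1)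
  (in their order), \<open>inv\<close> is the involution (identity outside the half-edges), and
  \<open>lvs\<close> lists the leaves in their order. Since all data is ordered these graphs are rigid,
  so isomorphism classes correspond exactly to well-formed records.\<close>
record ograph =
  deg :: "nat list"
  inv :: "nat \<times> nat \<Rightarrow> nat \<times> nat"
  lvs :: "(nat \<times> nat) list"

definition nv :: "ograph \<Rightarrow> nat" where "nv g = length (deg g)"

definition hes :: "ograph \<Rightarrow> (nat \<times> nat) set" where
  "hes g = {(v, i). v < nv g \<and> i < deg g ! v}"

definition wf_ograph :: "ograph \<Rightarrow> bool" where
  "wf_ograph g \<longleftrightarrow>
     (\<forall>h\<in>hes g. inv g h \<in> hes g \<and> inv g (inv g h) = h) \<and>
     (\<forall>h. h \<notin> hes g \<longrightarrow> inv g h = h) \<and>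
     distinct (lvs g) \<and> set (lvs g) = {h \<in> hes g. inv g h = h}"

definition adj :: "ograph \<Rightarrow> (nat \<times> nat) set" where
  "adj g = {(v, w). \<exists>i j. (v, i) \<in> hes g \<and> inv g (v, i) = (w, j) \<and> (w, j) \<noteq> (v, i)}"

definition connected_og :: "ograph \<Rightarrow> bool" where
  "connected_og g \<longleftrightarrow> (\<forall>v < nv g. \<forall>w < nv g. (v, w) \<in> (adj g)\<^sup>*)"

definition is_obj :: "ograph \<Rightarrow> bool" where
  "is_obj g \<longleftrightarrow> wf_ograph g \<and> nv g \<ge> 1 \<and> connected_og g"

text \<open>A bijection from the disjoint union of the V(q_l) to V(q), order preserving on each
  V(q_l), is encoded by the list \<sigma> with \<sigma>!j = the block l containing vertex j of q.\<close>
definition blk :: "nat list \<Rightarrow> nat \<Rightarrow> nat list" where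
  "blk \<sigma> l = filter (\<lambda>j. \<sigma> ! j = l) [0..<length \<sigma>]"

definition pos :: "nat list \<Rightarrow> nat \<Rightarrow> nat" where
  "pos \<sigma> j = length (filter (\<lambda>j'. \<sigma> ! j' = \<sigma> ! j) [0..<j])"

definition up :: "nat list \<Rightarrow> nat \<Rightarrow> nat \<times> nat \<Rightarrow> nat \<times> nat" where
  "up \<sigma> l h = (blk \<sigma> l ! fst h, snd h)"

definition subst_deg :: "ograph list \<Rightarrow> nat list \<Rightarrow> nat list" where
  "subst_deg qs \<sigma> = map (\<lambda>j. deg (qs ! (\<sigma> ! j)) ! pos \<sigma> j) [0..<length \<sigma>]"

definition subst_inv :: "ograph \<Rightarrow> ograph list \<Rightarrow> nat list \<Rightarrow> nat \<times> nat \<Rightarrow> nat \<times> nat" where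
  "subst_inv p qs \<sigma> = (\<lambda>(j, i).
     if j < length \<sigma> \<and> i < subst_deg qs \<sigma> ! j then
       (let l = \<sigma> ! j; g = qs ! l; h = (pos \<sigma> j, i) in
        if inv g h \<noteq> h then up \<sigma> l (inv g h)
        else (let k = (LEAST k. k < length (lvs g) \<and> lvs g ! k = h); e = inv p (l, k) in
              if e \<noteq> (l, k) then up \<sigma> (fst e) (lvs (qs ! fst e) ! snd e) else (j, i)))
     else (j, i))"

definition subst_lvs :: "ograph \<Rightarrow> ograph list \<Rightarrow> nat list \<Rightarrow> (nat \<times> nat) list" where
  "subst_lvs p qs \<sigma> = map (\<lambda>e. up \<sigma> (fst e) (lvs (qs ! fst e) ! snd e)) (lvs p)"

definition subst :: "ograph \<Rightarrow> ograph list \<Rightarrow> nat list \<Rightarrow> ograph" where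
  "subst p qs \<sigma> = \<lparr>deg = subst_deg qs \<sigma>, inv = subst_inv p qs \<sigma>, lvs = subst_lvs p qs \<sigma>\<rparr>"

definition morph_data :: "ograph \<Rightarrow> ograph list \<Rightarrow> nat list \<Rightarrow> bool" where
  "morph_data p qs \<sigma> \<longleftrightarrow> length qs = nv p \<and>
     (\<forall>l < nv p. is_obj (qs ! l) \<and> length (lvs (qs ! l)) = deg p ! l \<and>
                 length (blk \<sigma> l) = nv (qs ! l)) \<and>
     (\<forall>j < length \<sigma>. \<sigma> ! j < nv p)"

definition is_morph :: "ograph \<Rightarrow> ograph \<Rightarrow> ograph list \<Rightarrow> nat list \<Rightarrow> bool" where
  "is_morph p q qs \<sigma> \<longleftrightarrow> is_obj p \<and> is_obj q \<and> morph_data p qs \<sigma> \<and> subst p qs \<sigma> = q"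

definition corolla :: "nat \<Rightarrow> ograph" where
  "corolla d = \<lparr>deg = [d], inv = id, lvs = map (\<lambda>i. (0, i)) [0..<d]\<rparr>"

text \<open>Composition (iterated substitution) of (qs,\<sigma>) : p \<rightarrow> q followed by (rs,\<tau>) : q \<rightarrow> r.\<close>
definition comp_data :: "ograph list \<times> nat list \<Rightarrow> ograph list \<times> nat list \<Rightarrow> ograph list \<times> nat list" where
  "comp_data f g = (case f of (qs, \<sigma>) \<Rightarrow> case g of (rs, \<tau>) \<Rightarrow>
     (map (\<lambda>l. subst (qs ! l) (map (\<lambda>u. rs ! u) (blk \<sigma> l))
               (map (\<lambda>j. pos \<sigma> (\<tau> ! j)) (filter (\<lambda>j. \<sigma> ! (\<tau> ! j) = l) [0..<length \<tau>])))
          [0..<length qs],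
      map (\<lambda>x. \<sigma> ! x) \<tau>))"

type_synonym numOp_mor = "ograph \<times> ograph \<times> ograph list \<times> nat list"

text \<open>The category C(numOp)^op. A morphism is (source, target, (q_1..q_n), \<sigma>).\<close>
definition numOp_cat :: "(ograph, numOp_mor) category" where
  "numOp_cat = \<lparr>Ob = {g. is_obj g},
     Mor = {(p, q, qs, \<sigma>). is_morph p q qs \<sigma>},
     Dom = (\<lambda>f. fst f),
     Cod = (\<lambda>f. fst (snd f)),
     Idm = (\<lambda>p. (p, p, map corolla (deg p), [0..<nv p])),
     Cmp = (\<lambda>g f. (fst f, fst (snd g), comp_data (snd (snd f)) (snd (snd g))))\<rparr>"

end

(*
  The banana graphs B_k (two vertices joined by k parallel edges, no leaves) all receive a
  morphism from the leafless one-vertex graph, yet there is no morphism B_i -> B_j for i < j: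
  a morphism between graphs with equally many vertices substitutes one-vertex graphs, so every
  half-edge of the target whose partner sits at another vertex comes from a leaf glued along
  such a half-edge of the source, and the number 2k of these cannot grow.
  If C -> C(numOp)^op had property (F) with C Groebner, property (F) at the one-vertex graph and
  the pigeonhole principle would give infinitely many preimages of the B_k that receive
  morphisms from a single object of C; Noetherianity of the morphisms out of that object yields a
  morphism between two of these preimages, and its image is a forbidden morphism B_i -> B_j.
*)
theory Submission
  imports Defs "HOL-Library.Infinite_Set"
begin

lemma noetherian_hom_between:
  fixes g :: "nat \<Rightarrow> 'm" and C :: "('o, 'm, 'x) category_scheme"
  assumes C: "is_category C" and noeth: "noetherian_on (out_mor C a) (out_le C)"
    and g: "\<And>n. g n \<in> Hom C a (b n)"
  obtains i j where "i < j" "Hom C (b i) (b j) \<noteq> {}"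
proof -
  have "\<forall>n. g n \<in> out_mor C a" using g by (auto simp: Hom_def out_mor_def)
  then obtain i j where "i < j" "out_le C (g i) (g j)"
    using noeth unfolding noetherian_on_def by blast
  then obtain h where h: "h \<in> Mor C" "Dom C h = b i" "g j = Cmp C h (g i)"
    using g by (auto simp: out_le_def Hom_def)
  have "Cmp C h (g i) \<in> Hom C a (Cod C h)"
    using C h g[of i] by (auto simp: is_category_def Hom_def)
  then have "h \<in> Hom C (b i) (b j)" using h g[of j] by (auto simp: Hom_def)
  with \<open>i < j\<close> show thesis using that by blast
qed

lemma property_F_common_source:
  fixes c :: "nat \<Rightarrow> 'o" and C :: "('o, 'm, 'x) category_scheme"
  assumes F: "property_F C D Fo Fm" and d: "d \<in> Ob D"
    and c: "\<And>k. c k \<in> Ob C" and hom: "\<And>k. Hom D d (Fo (c k)) \<noteq> {}"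
  obtains a and r :: "nat \<Rightarrow> nat" where "a \<in> Ob C" "strict_mono r" "\<And>n. Hom C a (c (r n)) \<noteq> {}"
proof -
  obtain I where "finite I" and I_ob: "\<forall>(ci, fi)\<in>I. ci \<in> Ob C \<and> fi \<in> Hom D d (Fo ci)"
    and I_cover: "\<forall>c\<in>Ob C. \<forall>f\<in>Hom D d (Fo c). \<exists>(ci, fi)\<in>I. \<exists>g\<in>Hom C ci c. f = Cmp D (Fm g) fi"
    using bspec[OF F[unfolded property_F_def] d] by (elim exE conjE)
  have "\<forall>k\<in>UNIV. \<exists>x\<in>I. Hom C (fst x) (c k) \<noteq> {}"
  proof
    fix k
    obtain f where "f \<in> Hom D d (Fo (c k))" using hom by blast
    then have "\<exists>(ci, fi)\<in>I. \<exists>g\<in>Hom C ci (c k). f = Cmp D (Fm g) fi"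
      using I_cover c by blast
    then obtain ci fi g where "(ci, fi) \<in> I" "g \<in> Hom C ci (c k)" by auto
    then show "\<exists>x\<in>I. Hom C (fst x) (c k) \<noteq> {}" by (metis empty_iff fst_conv)
  qed
  from pigeonhole_infinite_rel[OF infinite_UNIV_nat \<open>finite I\<close> this]
  obtain x where "x \<in> I" and "infinite {k \<in> UNIV. Hom C (fst x) (c k) \<noteq> {}}" by blast
  from infinite_enumerate[OF this(2)]
  obtain r :: "nat \<Rightarrow> nat" where "strict_mono r" "\<And>n. Hom C (fst x) (c (r n)) \<noteq> {}" by auto
  with \<open>x \<in> I\<close> I_ob show thesis using that[of "fst x" r] by auto
qed

lemma property_F_hom_between:
  fixes c :: "nat \<Rightarrow> 'o" and C :: "('o, 'm, 'x) category_scheme"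
  assumes C: "is_category C" and noeth: "\<forall>a\<in>Ob C. noetherian_on (out_mor C a) (out_le C)"
    and Fun: "is_functor C D Fo Fm" and F: "property_F C D Fo Fm" and d: "d \<in> Ob D"
    and c: "\<And>k. c k \<in> Ob C" and hom: "\<And>k. Hom D d (Fo (c k)) \<noteq> {}"
  obtains i j where "i < j" "Hom D (Fo (c i)) (Fo (c j)) \<noteq> {}"
proof -
  obtain a and r :: "nat \<Rightarrow> nat"
    where a: "a \<in> Ob C" and r: "strict_mono r" and hom_a: "\<And>n. Hom C a (c (r n)) \<noteq> {}"
    using property_F_common_source[where c = c, OF F d c hom] by blast
  have "\<forall>n. \<exists>f. f \<in> Hom C a (c (r n))" using hom_a by blast
  then obtain g :: "nat \<Rightarrow> 'm" where g: "\<And>n. g n \<in> Hom C a (c (r n))" by metis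
  obtain i j where "i < j" and "Hom C (c (r i)) (c (r j)) \<noteq> {}"
    using noetherian_hom_between[where b = "\<lambda>n. c (r n)", OF C noeth[rule_format, OF a] g] by blast
  then obtain h where h: "h \<in> Hom C (c (r i)) (c (r j))" by blast
  have "Fm h \<in> Hom D (Fo (c (r i))) (Fo (c (r j)))"
    using Fun h by (auto simp: is_functor_def Hom_def)
  moreover have "r i < r j" using r \<open>i < j\<close> by (rule strict_monoD)
  ultimately show thesis using that by blast
qed

lemma set_blk: "set (blk \<sigma> l) = {j. j < length \<sigma> \<and> \<sigma> ! j = l}"
  by (auto simp: blk_def)

lemma blk_distinct:
  assumes "distinct \<sigma>" and j: "j < length \<sigma>"
  shows "blk \<sigma> (\<sigma> ! j) = [j]"
proof -
  have "filter (\<lambda>j'. j' = j) [0..<n] = [j]" if "j < n" for n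
    using that by (induction n) auto
  moreover have "blk \<sigma> (\<sigma> ! j) = filter (\<lambda>j'. j' = j) [0..<length \<sigma>]"
    unfolding blk_def using assms by (intro filter_cong) (auto simp: nth_eq_iff_index_eq)
  ultimately show ?thesis using j by simp
qed

lemma pos_distinct: "distinct \<sigma> \<Longrightarrow> j < length \<sigma> \<Longrightarrow> pos \<sigma> j = 0"
  unfolding pos_def by (simp add: filter_empty_conv nth_eq_iff_index_eq)

lemma nv_subst [simp]: "nv (subst p qs \<sigma>) = length \<sigma>"
  by (simp add: nv_def subst_def subst_deg_def)

lemma morph_data_set_eq:
  assumes md: "morph_data p qs \<sigma>"
  shows "set \<sigma> = {..<nv p}"
proof
  show "set \<sigma> \<subseteq> {..<nv p}" using md by (auto simp: morph_data_def in_set_conv_nth)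
  show "{..<nv p} \<subseteq> set \<sigma>"
  proof
    fix l assume "l \<in> {..<nv p}"
    then have "blk \<sigma> l \<noteq> []" using md by (auto simp: morph_data_def is_obj_def)
    then obtain j where "j \<in> set (blk \<sigma> l)" by (meson list.set_sel(1))
    then show "l \<in> set \<sigma>" by (auto simp: set_blk)
  qed
qed

lemma morph_nv_le:
  assumes "is_morph p q qs \<sigma>"
  shows "nv p \<le> nv q"
proof -
  have "nv p = card (set \<sigma>)" using assms by (auto simp: is_morph_def morph_data_set_eq)
  also have "\<dots> \<le> nv q" using assms by (auto simp: is_morph_def card_length)
  finally show ?thesis .
qed

lemma morph_length_lvs: "is_morph p q qs \<sigma> \<Longrightarrow> length (lvs q) = length (lvs p)"
  by (auto simp: is_morph_def subst_def subst_lvs_def)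

lemma morph_distinct:
  assumes "is_morph p q qs \<sigma>" and "nv p = nv q"
  shows "distinct \<sigma>"
  using assms by (intro card_distinct) (auto simp: is_morph_def morph_data_set_eq)

lemma morph_nv_eq_blocks:
  assumes m: "is_morph p q qs \<sigma>" and nv_eq: "nv p = nv q" and j: "j < length \<sigma>"
  shows "blk \<sigma> (\<sigma> ! j) = [j]" and "pos \<sigma> j = 0" and "nv (qs ! (\<sigma> ! j)) = 1"
proof -
  have "distinct \<sigma>" using m nv_eq by (rule morph_distinct)
  then show blk: "blk \<sigma> (\<sigma> ! j) = [j]" and "pos \<sigma> j = 0"
    using j by (simp_all add: blk_distinct pos_distinct)
  have "\<sigma> ! j < nv p" using m j by (simp add: is_morph_def morph_data_def)
  then show "nv (qs ! (\<sigma> ! j)) = 1" using m blk by (auto simp: is_morph_def morph_data_def)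
qed

lemma hes_iff: "(v, i) \<in> hes g \<longleftrightarrow> v < nv g \<and> i < deg g ! v"
  by (simp add: hes_def)

lemma finite_hes: "finite (hes g)"
proof (rule finite_subset)
  show "hes g \<subseteq> {..<nv g} \<times> {..<Max (set (deg g))}"
    unfolding hes_def nv_def by (auto simp: less_le_trans)
qed simp

definition nonloop_hes :: "ograph \<Rightarrow> (nat \<times> nat) set" where
  "nonloop_hes g = {h \<in> hes g. fst (inv g h) \<noteq> fst h}"

definition leaf_index :: "ograph \<Rightarrow> nat \<times> nat \<Rightarrow> nat" where
  "leaf_index g h = (LEAST k. k < length (lvs g) \<and> lvs g ! k = h)"

lemma inv_subst_nv_eq:
  assumes m: "is_morph p q qs \<sigma>" and nv_eq: "nv p = nv q" and h: "(j, i) \<in> hes q"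
  defines "g \<equiv> qs ! (\<sigma> ! j)"
  shows "(0, i) \<in> hes g"
    and "inv q (j, i) = (if inv g (0, i) \<noteq> (0, i) then up \<sigma> (\<sigma> ! j) (inv g (0, i))
      else let k = leaf_index g (0, i); e = inv p (\<sigma> ! j, k) in
        if e \<noteq> (\<sigma> ! j, k) then up \<sigma> (fst e) (lvs (qs ! fst e) ! snd e) else (j, i))"
proof -
  have q: "q = subst p qs \<sigma>" using m by (simp add: is_morph_def)
  have j: "j < length \<sigma>" using h q by (simp add: hes_iff)
  have i: "i < subst_deg qs \<sigma> ! j" using h q by (simp add: hes_iff subst_def)
  have pos: "pos \<sigma> j = 0" by (rule morph_nv_eq_blocks(2)[OF m nv_eq j])
  show "(0, i) \<in> hes g"
    using i j pos morph_nv_eq_blocks(3)[OF m nv_eq j] by (simp add: hes_iff subst_deg_def g_def)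
  show "inv q (j, i) = (if inv g (0, i) \<noteq> (0, i) then up \<sigma> (\<sigma> ! j) (inv g (0, i))
      else let k = leaf_index g (0, i); e = inv p (\<sigma> ! j, k) in
        if e \<noteq> (\<sigma> ! j, k) then up \<sigma> (fst e) (lvs (qs ! fst e) ! snd e) else (j, i))"
    using q j i pos by (simp add: subst_def subst_inv_def Let_def g_def leaf_index_def)
qed

lemma nonloop_hes_source:
  assumes m: "is_morph p q qs \<sigma>" and nv_eq: "nv p = nv q" and nl: "(j, i) \<in> nonloop_hes q"
  defines "g \<equiv> qs ! (\<sigma> ! j)"
  defines "k \<equiv> leaf_index g (0, i)"
  shows "j < length \<sigma>" and "lvs g ! k = (0, i)" and "(\<sigma> ! j, k) \<in> nonloop_hes p"
proof -
  have md: "morph_data p qs \<sigma>" and q: "q = subst p qs \<sigma>" and wf_p: "wf_ograph p"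
    using m by (auto simp: is_morph_def is_obj_def)
  have "(j, i) \<in> hes q" and nonloop: "fst (inv q (j, i)) \<noteq> j"
    using nl by (auto simp: nonloop_hes_def)
  then show j: "j < length \<sigma>" using q by (simp add: hes_iff)
  define l where "l = \<sigma> ! j"
  have l: "l < nv p" using md j by (simp add: morph_data_def l_def)
  note blk = morph_nv_eq_blocks(1)[OF m nv_eq j, folded l_def]
  have g: "wf_ograph g" "length (lvs g) = deg p ! l" "nv g = 1"
    using md l morph_nv_eq_blocks(3)[OF m nv_eq j] by (auto simp: morph_data_def is_obj_def g_def l_def)
  note hi = inv_subst_nv_eq(1)[OF m nv_eq \<open>(j, i) \<in> hes q\<close>, folded g_def]
    and inv_q = inv_subst_nv_eq(2)[OF m nv_eq \<open>(j, i) \<in> hes q\<close>, folded g_def l_def k_def]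
  \<comment> \<open>every half-edge of a block sits at its single vertex, which becomes vertex j of q\<close>
  have up_l: "fst (up \<sigma> l h) = j" if "h \<in> hes g" for h
    using that g(3) blk by (cases h) (simp add: hes_iff up_def)
  have leaf: "inv g (0, i) = (0, i)"
  proof (rule ccontr)
    assume "inv g (0, i) \<noteq> (0, i)"
    moreover have "inv g (0, i) \<in> hes g" using g(1) hi by (simp add: wf_ograph_def)
    ultimately show False using nonloop inv_q up_l by simp
  qed
  then have "\<exists>k'. k' < length (lvs g) \<and> lvs g ! k' = (0, i)"
    using g(1) hi by (auto simp: wf_ograph_def in_set_conv_nth)
  then have k: "k < length (lvs g)" "lvs g ! k = (0, i)"
    unfolding k_def leaf_index_def by (metis (mono_tags, lifting) LeastI_ex)+
  then show "lvs g ! k = (0, i)" by simp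
  have lk: "(l, k) \<in> hes p" using k(1) g(2) l by (simp add: hes_iff)
  define e where "e = inv p (l, k)"
  have e: "e \<in> hes p" using wf_p lk by (simp add: wf_ograph_def e_def)
  have inv_q_leaf: "inv q (j, i) = (if e \<noteq> (l, k) then up \<sigma> (fst e) (lvs (qs ! fst e) ! snd e) else (j, i))"
    using inv_q leaf by (simp add: e_def Let_def)
  have "fst e \<noteq> l"
  proof
    assume fe: "fst e = l"
    then have "snd e < length (lvs g)" using e g(2) by (cases e) (simp add: hes_iff)
    then have "lvs g ! snd e \<in> hes g" using g(1) by (auto simp: wf_ograph_def)
    then show False using nonloop inv_q_leaf fe up_l by (auto simp: g_def l_def split: if_splits)
  qed
  then show "(\<sigma> ! j, k) \<in> nonloop_hes p" using lk by (simp add: nonloop_hes_def e_def l_def)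
qed

lemma card_nonloop_hes_le:
  assumes m: "is_morph p q qs \<sigma>" and nv_eq: "nv p = nv q"
  shows "card (nonloop_hes q) \<le> card (nonloop_hes p)"
proof -
  define F where "F = (\<lambda>(j, i). (\<sigma> ! j, leaf_index (qs ! (\<sigma> ! j)) (0, i)))"
  have "F ` nonloop_hes q \<subseteq> nonloop_hes p"
    using nonloop_hes_source(3)[OF m nv_eq] by (auto simp: F_def)
  moreover have "inj_on F (nonloop_hes q)"
  proof (rule inj_onI, clarify)
    fix j i j' i'
    assume h: "(j, i) \<in> nonloop_hes q" and h': "(j', i') \<in> nonloop_hes q" and "F (j, i) = F (j', i')"
    then have "(\<sigma> ! j, leaf_index (qs ! (\<sigma> ! j)) (0, i)) = (\<sigma> ! j', leaf_index (qs ! (\<sigma> ! j')) (0, i'))"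
      by (simp only: F_def prod.case)
    then show "j = j' \<and> i = i'"
      using nonloop_hes_source(1,2)[OF m nv_eq h] nonloop_hes_source(1,2)[OF m nv_eq h']
        morph_distinct[OF m nv_eq] by (metis nth_eq_iff_index_eq prod.inject)
  qed
  moreover have "finite (nonloop_hes p)" using finite_hes by (simp add: nonloop_hes_def)
  ultimately show ?thesis by (meson card_inj_on_le)
qed

lemma Ob_numOp_cat: "p \<in> Ob numOp_cat \<longleftrightarrow> is_obj p"
  by (simp add: numOp_cat_def)

lemma Hom_numOp_nonempty_iff: "Hom numOp_cat p q \<noteq> {} \<longleftrightarrow> (\<exists>qs \<sigma>. is_morph p q qs \<sigma>)"
  by (auto simp: Hom_def numOp_cat_def)

lemma isomorphic_numOp_invariants:
  assumes "isomorphic numOp_cat X Y"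
  shows "nv X = nv Y" and "length (lvs X) = length (lvs Y)"
    and "card (nonloop_hes X) = card (nonloop_hes Y)"
proof -
  obtain qs \<sigma> rs \<tau> where XY: "is_morph X Y qs \<sigma>" and YX: "is_morph Y X rs \<tau>"
    using assms unfolding isomorphic_def by (metis Hom_numOp_nonempty_iff empty_iff)
  show nv: "nv X = nv Y" using morph_nv_le[OF XY] morph_nv_le[OF YX] by simp
  show "length (lvs X) = length (lvs Y)" using morph_length_lvs[OF XY] by simp
  show "card (nonloop_hes X) = card (nonloop_hes Y)"
    using card_nonloop_hes_le[OF XY nv] card_nonloop_hes_le[OF YX nv[symmetric]] by simp
qed

lemma is_obj_corolla_0: "is_obj (corolla 0)"
  by (auto simp: is_obj_def wf_ograph_def hes_def corolla_def nv_def connected_og_def)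

lemma subst_corolla_0:
  assumes X: "is_obj X" and leafless: "lvs X = []"
  shows "subst (corolla 0) [X] (replicate (nv X) 0) = X"
proof -
  let ?\<sigma> = "replicate (nv X) 0"
  have wf: "wf_ograph X" using X by (simp add: is_obj_def)
  have blk: "blk ?\<sigma> 0 = [0..<nv X]" and pos: "\<And>j. j < nv X \<Longrightarrow> pos ?\<sigma> j = j"
    by (simp_all add: blk_def pos_def)
  have deg: "subst_deg [X] ?\<sigma> = deg X"
    by (rule nth_equalityI) (auto simp: subst_deg_def pos[unfolded nv_def] nv_def)
  have "subst_inv (corolla 0) [X] ?\<sigma> (j, i) = inv X (j, i)" for j i
  proof (cases "(j, i) \<in> hes X")
    case True
    then have "inv X (j, i) \<in> hes X" using wf by (simp add: wf_ograph_def)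
    then have "fst (inv X (j, i)) < nv X" by (cases "inv X (j, i)") (simp add: hes_iff)
    then show ?thesis using True deg
      by (auto simp: hes_iff subst_inv_def Let_def pos up_def blk corolla_def)
  next
    case False
    then show ?thesis using wf deg by (auto simp: hes_iff nv_def subst_inv_def wf_ograph_def)
  qed
  then have "subst_inv (corolla 0) [X] ?\<sigma> = inv X" by auto
  then show ?thesis using deg leafless by (simp add: subst_def subst_lvs_def corolla_def)
qed

lemma Hom_corolla_0_nonempty:
  assumes "is_obj X" and "lvs X = []"
  shows "Hom numOp_cat (corolla 0) X \<noteq> {}"
proof -
  have "is_morph (corolla 0) X [X] (replicate (nv X) 0)"
    using assms is_obj_corolla_0 subst_corolla_0[OF assms]
    by (auto simp: is_morph_def morph_data_def nv_def corolla_def blk_def)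
  then show ?thesis by (auto simp: Hom_numOp_nonempty_iff)
qed

definition banana :: "nat \<Rightarrow> ograph" where
  "banana k = \<lparr>deg = [k, k],
     inv = (\<lambda>(v, i). if v < 2 \<and> i < k then (if v = 0 then 1 else 0, i) else (v, i)), lvs = []\<rparr>"

lemma nv_banana [simp]: "nv (banana k) = 2"
  by (simp add: nv_def banana_def)

lemma lvs_banana [simp]: "lvs (banana k) = []"
  by (simp add: banana_def)

lemma hes_banana: "hes (banana k) = {..<2} \<times> {..<k}"
  by (auto simp: hes_def banana_def nv_def less_Suc_eq numeral_2_eq_2)

lemma inv_banana:
  "inv (banana k) (v, i) = (if v < 2 \<and> i < k then (if v = 0 then 1 else 0, i) else (v, i))"
  by (simp add: banana_def)

lemma card_nonloop_hes_banana: "card (nonloop_hes (banana k)) = 2 * k"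
proof -
  have "nonloop_hes (banana k) = {..<2} \<times> {..<k}"
    unfolding nonloop_hes_def hes_banana by (auto simp: inv_banana split: if_splits)
  then show ?thesis by simp
qed

lemma is_obj_banana:
  assumes "0 < k"
  shows "is_obj (banana k)"
proof -
  have "wf_ograph (banana k)"
    unfolding wf_ograph_def hes_banana by (auto simp: inv_banana less_2_cases_iff)
  moreover have "(0, 1) \<in> adj (banana k)" and "(1, 0) \<in> adj (banana k)"
    unfolding adj_def hes_banana using assms by (auto simp: inv_banana)
  then have "connected_og (banana k)"
    by (auto simp: connected_og_def less_2_cases_iff)
  ultimately show ?thesis by (simp add: is_obj_def)
qed

theorem proposition3p12:
  fixes C :: "('o, 'm) category" and Fo :: "'o \<Rightarrow> ograph" and Fm :: "'m \<Rightarrow> numOp_mor"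
  shows "\<not> quasi_groebner_via C numOp_cat Fo Fm"
proof
  assume "quasi_groebner_via C numOp_cat Fo Fm"
  then have C: "is_category C" and noeth: "\<forall>a\<in>Ob C. noetherian_on (out_mor C a) (out_le C)"
    and Fun: "is_functor C numOp_cat Fo Fm" and F: "property_F C numOp_cat Fo Fm"
    and es: "essentially_surjective C numOp_cat Fo"
    by (auto simp: quasi_groebner_via_def groebner_def)
  have "\<forall>k. \<exists>a\<in>Ob C. isomorphic numOp_cat (Fo a) (banana (Suc k))"
    using es is_obj_banana by (simp add: essentially_surjective_def Ob_numOp_cat)
  then obtain c where c: "\<And>k. c k \<in> Ob C"
    and iso: "\<And>k. isomorphic numOp_cat (Fo (c k)) (banana (Suc k))" by metis
  have inv: "nv (Fo (c k)) = 2" "lvs (Fo (c k)) = []" "card (nonloop_hes (Fo (c k))) = 2 * Suc k" for k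
    using isomorphic_numOp_invariants[OF iso[of k]] by (simp_all add: card_nonloop_hes_banana)
  have corolla: "corolla 0 \<in> Ob numOp_cat" using is_obj_corolla_0 by (simp add: Ob_numOp_cat)
  have "Hom numOp_cat (corolla 0) (Fo (c k)) \<noteq> {}" for k
    using Fun c[of k] inv(2)[of k] by (intro Hom_corolla_0_nonempty) (auto simp: is_functor_def Ob_numOp_cat)
  then obtain i j where "i < j" and "Hom numOp_cat (Fo (c i)) (Fo (c j)) \<noteq> {}"
    using property_F_hom_between[where c = c, OF C noeth Fun F corolla c] by blast
  then have "card (nonloop_hes (Fo (c j))) \<le> card (nonloop_hes (Fo (c i)))"
    using card_nonloop_hes_le inv(1) by (auto simp: Hom_numOp_nonempty_iff)
  with \<open>i < j\<close> show False by (simp add: inv(3))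
qed

end
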